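(* Let $t \ge 2$ and $G = K_{m_1} \otimes \cdots \otimes K_{m_t}$ with $m_i \geq 3$ for all $i$. Then $$\dim(G) \geq \max_{1 \le j \le t} \dim\Big(\bigotimes_{i \ne j} K_{m_i}\Big),$$ where $\bigotimes_{i\ne j} K_{m_i}$ is the tensor product of the $t-1$ cliques obtained by omitting the $j$-th factor.
   Context: $K_r$ is the complete graph on $r$ vertices. The tensor product of graphs has vertex set the Cartesian product of vertex sets, with $(a_1,\dots,a_t)$ adjacent to $(b_1,\dots,b_t)$ iff $a_ib_i$ is an edge of the $i$-th factor for every $i$ (a product with a single factor is that factor). For a connected graph and an ordered set $W=\{w_1,\dots,w_k\}$ of vertices, $r(v\mid W)=(d(v,w_1),\dots,d(v,w_k))$; $W$ is resolving if distinct vertices have distinct representations; $\dim(G)$ is the minimum size of a resolving set. *)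

theory Defs
  imports Main
begin

type_synonym 'a graph = "'a set \<times> ('a \<Rightarrow> 'a \<Rightarrow> bool)"

definition verts :: "'a graph \<Rightarrow> 'a set" where "verts G = fst G"
definition adj :: "'a graph \<Rightarrow> 'a \<Rightarrow> 'a \<Rightarrow> bool" where "adj G = snd G"

definition walk_of_length :: "'a graph \<Rightarrow> nat \<Rightarrow> 'a \<Rightarrow> 'a \<Rightarrow> bool" where
  "walk_of_length G n u v \<longleftrightarrow>
     (\<exists>p. length p = Suc n \<and> hd p = u \<and> last p = v \<and> set p \<subseteq> verts G \<and>
          (\<forall>i<n. adj G (p ! i) (p ! Suc i)))"

text \<open>Graph distance (shortest walk length); meaningful for connected graphs.\<close>
definition gdist :: "'a graph \<Rightarrow> 'a \<Rightarrow> 'a \<Rightarrow> nat" where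
  "gdist G u v = (LEAST n. walk_of_length G n u v)"

definition connected_graph :: "'a graph \<Rightarrow> bool" where
  "connected_graph G \<longleftrightarrow> (\<forall>u\<in>verts G. \<forall>v\<in>verts G. \<exists>n. walk_of_length G n u v)"

definition resolving :: "'a graph \<Rightarrow> 'a set \<Rightarrow> bool" where
  "resolving G W \<longleftrightarrow> W \<subseteq> verts G \<and>
     (\<forall>u\<in>verts G. \<forall>v\<in>verts G. (\<forall>w\<in>W. gdist G u w = gdist G v w) \<longrightarrow> u = v)"

definition metric_dim :: "'a graph \<Rightarrow> nat" where
  "metric_dim G = (LEAST k. \<exists>W. finite W \<and> card W = k \<and> resolving G W)"

definition complete_graph :: "nat \<Rightarrow> nat graph" where
  "complete_graph r = ({0..<r}, \<lambda>a b. a < r \<and> b < r \<and> a \<noteq> b)"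

definition tensor_prod :: "'a graph list \<Rightarrow> 'a list graph" where
  "tensor_prod Gs =
     ({xs. length xs = length Gs \<and> (\<forall>i<length Gs. xs ! i \<in> verts (Gs ! i))},
      \<lambda>xs ys. length xs = length Gs \<and> length ys = length Gs \<and>
              (\<forall>i<length Gs. adj (Gs ! i) (xs ! i) (ys ! i)))"

definition clique_tensor :: "nat list \<Rightarrow> nat list graph" where
  "clique_tensor ms = tensor_prod (map complete_graph ms)"

definition omit :: "nat \<Rightarrow> 'b list \<Rightarrow> 'b list" where
  "omit j xs = take j xs @ drop (Suc j) xs"

end

theory Submission
  imports Defs
begin

text \<open>When every factor has at least three vertices, two distinct vertices of a tensor
  product of cliques are at distance 1 if they differ in every coordinate and at distance 2
  otherwise (a common neighbour avoids both entries in each coordinate). Hence the distance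
  between \<open>x\<close> and \<open>y\<close> is determined by whether \<open>x\<^sub>j = y\<^sub>j\<close> together with the distance
  of the tuples with the \<open>j\<close>-th entry deleted. So deleting the \<open>j\<close>-th coordinate maps a
  resolving set onto a resolving set of the product without the \<open>j\<close>-th factor: two distinct
  vertices of the smaller product, lifted with the same \<open>j\<close>-th entry, are separated by some
  \<open>w\<close>, and then their projections are separated by the projection of \<open>w\<close>.\<close>

lemma walk_of_length_0_iff: "walk_of_length G 0 u v \<longleftrightarrow> u = v \<and> u \<in> verts G"
proof
  assume "walk_of_length G 0 u v"
  then obtain p where p: "length p = Suc 0" "hd p = u" "last p = v" "set p \<subseteq> verts G"
    unfolding walk_of_length_def by auto
  then obtain a where "p = [a]" by (auto simp: length_Suc_conv)
  with p show "u = v \<and> u \<in> verts G" by auto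
next
  assume "u = v \<and> u \<in> verts G"
  then show "walk_of_length G 0 u v"
    unfolding walk_of_length_def by (intro exI[of _ "[u]"]) auto
qed

lemma walk_of_length_1_imp_adj: "walk_of_length G 1 u v \<Longrightarrow> adj G u v"
  unfolding walk_of_length_def by (auto simp: length_Suc_conv)

lemma walk_of_length_1I: "u \<in> verts G \<Longrightarrow> v \<in> verts G \<Longrightarrow> adj G u v \<Longrightarrow> walk_of_length G 1 u v"
  unfolding walk_of_length_def by (intro exI[of _ "[u, v]"]) auto

lemma walk_of_length_2I:
  "u \<in> verts G \<Longrightarrow> z \<in> verts G \<Longrightarrow> v \<in> verts G \<Longrightarrow> adj G u z \<Longrightarrow> adj G z v
   \<Longrightarrow> walk_of_length G 2 u v"
  unfolding walk_of_length_def
  by (intro exI[of _ "[u, z, v]"]) (auto simp: less_Suc_eq numeral_2_eq_2)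

lemma gdist_eqI:
  assumes "walk_of_length G n u v" and "\<And>m. m < n \<Longrightarrow> \<not> walk_of_length G m u v"
  shows "gdist G u v = n"
  unfolding gdist_def using assms by (intro Least_equality) (auto simp: not_less[symmetric])

lemma gdist_eq_0_iff:
  assumes "walk_of_length G n u v"
  shows "gdist G u v = 0 \<longleftrightarrow> u = v"
proof
  assume "gdist G u v = 0"
  then have "walk_of_length G 0 u v"
    using LeastI[of "\<lambda>n. walk_of_length G n u v", OF assms] by (simp add: gdist_def)
  then show "u = v" by (simp add: walk_of_length_0_iff)
next
  assume "u = v"
  moreover have "u \<in> verts G"
  proof -
    obtain p where "length p = Suc n" "hd p = u" "set p \<subseteq> verts G"
      using assms unfolding walk_of_length_def by blast
    then show ?thesis by (metis hd_in_set length_0_conv nat.distinct(1) subsetD)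
  qed
  ultimately show "gdist G u v = 0"
    by (intro gdist_eqI) (auto simp: walk_of_length_0_iff)
qed

lemma resolving_verts: "connected_graph G \<Longrightarrow> resolving G (verts G)"
  unfolding resolving_def connected_graph_def by (metis gdist_eq_0_iff subset_refl)

lemma metric_dim_le_card: "finite W \<Longrightarrow> resolving G W \<Longrightarrow> metric_dim G \<le> card W"
  unfolding metric_dim_def by (rule Least_le) blast

lemma metric_dim_attained:
  assumes "finite (verts G)" and "connected_graph G"
  obtains W where "finite W" "card W = metric_dim G" "resolving G W"
proof -
  have "\<exists>k W. finite W \<and> card W = k \<and> resolving G W"
    using assms resolving_verts by blast
  from LeastI_ex[OF this] show ?thesis
    using that unfolding metric_dim_def by blast
qed

lemma verts_clique_tensor:
  "verts (clique_tensor ms) = {xs. length xs = length ms \<and> (\<forall>i<length ms. xs ! i < ms ! i)}"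
  by (simp add: clique_tensor_def tensor_prod_def verts_def complete_graph_def)

lemma adj_clique_tensor:
  "adj (clique_tensor ms) x y \<longleftrightarrow> length x = length ms \<and> length y = length ms \<and>
     (\<forall>i<length ms. x ! i < ms ! i \<and> y ! i < ms ! i \<and> x ! i \<noteq> y ! i)"
  by (simp add: clique_tensor_def tensor_prod_def adj_def complete_graph_def)

lemma finite_verts_clique_tensor: "finite (verts (clique_tensor ms))"
proof (rule finite_subset)
  show "verts (clique_tensor ms) \<subseteq> {xs. set xs \<subseteq> {0..<sum_list ms} \<and> length xs = length ms}"
    by (auto simp: verts_clique_tensor in_set_conv_nth
        intro!: less_le_trans[OF _ member_le_sum_list[OF nth_mem]])
  show "finite {xs. set xs \<subseteq> {0..<sum_list ms} \<and> length xs = length ms}"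
    by (rule finite_lists_length_eq) simp
qed

lemma clique_tensor_common_neighbour:
  assumes "\<forall>i<length ms. ms ! i \<ge> 3"
    and "x \<in> verts (clique_tensor ms)" and "y \<in> verts (clique_tensor ms)"
  obtains z where "z \<in> verts (clique_tensor ms)"
    "adj (clique_tensor ms) x z" "adj (clique_tensor ms) z y"
proof
  let ?z = "map (\<lambda>i. if x ! i \<noteq> 0 \<and> y ! i \<noteq> 0 then 0 else if x ! i \<noteq> 1 \<and> y ! i \<noteq> 1 then 1 else 2)
              [0..<length ms]"
  show z: "?z \<in> verts (clique_tensor ms)"
    using assms(1) by (fastforce simp: verts_clique_tensor)
  show "adj (clique_tensor ms) x ?z" "adj (clique_tensor ms) ?z y"
    using assms(2,3) z by (auto simp: adj_clique_tensor verts_clique_tensor)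
qed

definition clique_tensor_dist :: "nat list \<Rightarrow> nat list \<Rightarrow> nat" where
  "clique_tensor_dist x y = (if x = y then 0 else if \<forall>i<length x. x ! i \<noteq> y ! i then 1 else 2)"

lemma walk_of_length_clique_tensor_dist:
  assumes "\<forall>i<length ms. ms ! i \<ge> 3"
    and x: "x \<in> verts (clique_tensor ms)" and y: "y \<in> verts (clique_tensor ms)"
  shows "walk_of_length (clique_tensor ms) (clique_tensor_dist x y) x y"
proof -
  consider "x = y" | "x \<noteq> y" "adj (clique_tensor ms) x y" | "x \<noteq> y" "\<not> adj (clique_tensor ms) x y"
    by blast
  then show ?thesis
  proof cases
    case 1
    then show ?thesis using x by (simp add: clique_tensor_dist_def walk_of_length_0_iff)
  next
    case 2
    then have "clique_tensor_dist x y = 1"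
      by (simp add: clique_tensor_dist_def adj_clique_tensor)
    then show ?thesis using 2 x y walk_of_length_1I by metis
  next
    case 3
    then have "clique_tensor_dist x y = 2"
      using x y by (auto simp: clique_tensor_dist_def adj_clique_tensor verts_clique_tensor)
    moreover obtain z where "z \<in> verts (clique_tensor ms)"
      "adj (clique_tensor ms) x z" "adj (clique_tensor ms) z y"
      using clique_tensor_common_neighbour[OF assms] .
    ultimately show ?thesis using x y by (simp add: walk_of_length_2I)
  qed
qed

lemma connected_clique_tensor:
  "\<forall>i<length ms. ms ! i \<ge> 3 \<Longrightarrow> connected_graph (clique_tensor ms)"
  unfolding connected_graph_def using walk_of_length_clique_tensor_dist by blast

lemma gdist_clique_tensor:
  assumes "\<forall>i<length ms. ms ! i \<ge> 3"
    and x: "x \<in> verts (clique_tensor ms)" and y: "y \<in> verts (clique_tensor ms)"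
  shows "gdist (clique_tensor ms) x y = clique_tensor_dist x y"
proof (rule gdist_eqI[OF walk_of_length_clique_tensor_dist[OF assms]])
  fix m assume m: "m < clique_tensor_dist x y"
  show "\<not> walk_of_length (clique_tensor ms) m x y"
  proof
    assume walk: "walk_of_length (clique_tensor ms) m x y"
    have "clique_tensor_dist x y \<le> 2" by (simp add: clique_tensor_dist_def)
    then consider "m = 0" | "m = 1" "clique_tensor_dist x y = 2"
      using m by (cases m) auto
    then show False
    proof cases
      case 1
      then show False using walk m by (simp add: walk_of_length_0_iff clique_tensor_dist_def)
    next
      case 2
      then have "adj (clique_tensor ms) x y" using walk walk_of_length_1_imp_adj by simp
      then show False using 2 x by (auto simp: adj_clique_tensor verts_clique_tensor
          clique_tensor_dist_def split: if_splits)
    qed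
  qed
qed

lemma all_less_split:
  assumes "j < n"
  shows "(\<forall>i<n. P i) \<longleftrightarrow> P j \<and> (\<forall>i<n - 1. P (if i < j then i else Suc i))"
proof (intro iffI allI impI conjI)
  assume "P j \<and> (\<forall>i<n - 1. P (if i < j then i else Suc i))"
  then show "P i" if "i < n" for i
  proof (cases i j rule: linorder_cases)
    case less
    then have "i < n - 1" using assms by linarith
    then show ?thesis using less \<open>P j \<and> _\<close> by metis
  next
    case greater
    then have "i - 1 < n - 1" "\<not> i - 1 < j" "Suc (i - 1) = i" using that by auto
    then show ?thesis using \<open>P j \<and> _\<close> by metis
  qed (use \<open>P j \<and> _\<close> in simp)
qed (use assms in auto)

lemma length_omit: "j < length xs \<Longrightarrow> length (omit j xs) = length xs - 1"
  by (simp add: omit_def)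

lemma nth_omit:
  "j < length xs \<Longrightarrow> i < length xs - 1 \<Longrightarrow> omit j xs ! i = xs ! (if i < j then i else Suc i)"
  by (auto simp: omit_def nth_append min_def)

lemma all_nth_split_omit:
  assumes "length x = length y" "j < length x"
  shows "(\<forall>i<length x. P (x ! i) (y ! i)) \<longleftrightarrow>
           P (x ! j) (y ! j) \<and> (\<forall>i<length x - 1. P (omit j x ! i) (omit j y ! i))"
  using all_less_split[OF assms(2), of "\<lambda>i. P (x ! i) (y ! i)"] assms by (simp add: nth_omit)

lemma list_eq_iff_nth_omit:
  "length x = length y \<Longrightarrow> j < length x \<Longrightarrow> x = y \<longleftrightarrow> x ! j = y ! j \<and> omit j x = omit j y"
  using all_nth_split_omit[of x y j "(=)"] by (auto simp: list_eq_iff_nth_eq length_omit)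

lemma clique_tensor_dist_omit:
  assumes "length x = length y" "j < length x" "2 \<le> length x"
  shows "clique_tensor_dist x y =
    (if x ! j = y ! j then (if clique_tensor_dist (omit j x) (omit j y) = 0 then 0 else 2)
     else if clique_tensor_dist (omit j x) (omit j y) = 1 then 1 else 2)"
proof -
  have "0 < length (omit j x)" using assms by (simp add: length_omit)
  then have "\<not> (\<forall>i<length (omit j x). omit j x ! i \<noteq> omit j x ! i)" by blast
  then show ?thesis
    using list_eq_iff_nth_omit[OF assms(1,2)] all_nth_split_omit[OF assms(1,2), of "(\<noteq>)"] assms
    by (auto simp: clique_tensor_dist_def length_omit)
qed

lemma verts_clique_tensor_omit:
  assumes "j < length ms"
  shows "x \<in> verts (clique_tensor ms) \<longleftrightarrow>
     length x = length ms \<and> x ! j < ms ! j \<and> omit j x \<in> verts (clique_tensor (omit j ms))"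
  using all_nth_split_omit[of x ms j "(<)"] assms by (auto simp: verts_clique_tensor length_omit)

definition insert_nth :: "nat \<Rightarrow> 'a \<Rightarrow> 'a list \<Rightarrow> 'a list" where
  "insert_nth j a xs = take j xs @ a # drop j xs"

lemma length_insert_nth: "length (insert_nth j a xs) = Suc (length xs)"
  by (simp add: insert_nth_def)

lemma nth_insert_nth_same: "j \<le> length xs \<Longrightarrow> insert_nth j a xs ! j = a"
  by (simp add: insert_nth_def nth_append)

lemma omit_insert_nth: "j \<le> length xs \<Longrightarrow> omit j (insert_nth j a xs) = xs"
  by (simp add: insert_nth_def omit_def)

lemma resolving_clique_tensor_omit:
  assumes "2 \<le> length ms" "\<forall>i<length ms. ms ! i \<ge> 3" and j: "j < length ms"
    and W: "resolving (clique_tensor ms) W"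
  shows "resolving (clique_tensor (omit j ms)) (omit j ` W)"
proof -
  let ?G = "clique_tensor ms" and ?H = "clique_tensor (omit j ms)"
  have factors_omit: "\<forall>i<length (omit j ms). omit j ms ! i \<ge> 3"
    using assms by (auto simp: length_omit nth_omit)
  have W_verts: "W \<subseteq> verts ?G" using W by (simp add: resolving_def)
  show ?thesis unfolding resolving_def
  proof (intro conjI ballI impI)
    show "omit j ` W \<subseteq> verts ?H" using W_verts verts_clique_tensor_omit[OF j] by blast
    fix u' v' assume u': "u' \<in> verts ?H" and v': "v' \<in> verts ?H"
      and same_dist: "\<forall>w'\<in>omit j ` W. gdist ?H u' w' = gdist ?H v' w'"
    have len: "length u' = length ms - 1" "length v' = length ms - 1"
      using u' v' j by (simp_all add: verts_clique_tensor length_omit)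
    define u where "u = insert_nth j 0 u'"
    define v where "v = insert_nth j 0 v'"
    have u: "length u = length ms" "u ! j = 0" "omit j u = u'"
      and v: "length v = length ms" "v ! j = 0" "omit j v = v'"
      using len j by (auto simp: u_def v_def length_insert_nth nth_insert_nth_same omit_insert_nth)
    have "0 < ms ! j" using assms(2) j by force
    then have uv: "u \<in> verts ?G" "v \<in> verts ?G"
      using verts_clique_tensor_omit[OF j] u v u' v' by auto
    show "u' = v'"
    proof (rule ccontr)
      assume "u' \<noteq> v'"
      then have "u \<noteq> v" using u v by auto
      then obtain w where w: "w \<in> W" and "gdist ?G u w \<noteq> gdist ?G v w"
        using W uv unfolding resolving_def by blast
      moreover have wG: "w \<in> verts ?G" and wH: "omit j w \<in> verts ?H"
        using w W_verts verts_clique_tensor_omit[OF j] by auto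
      ultimately have "clique_tensor_dist u w \<noteq> clique_tensor_dist v w"
        using gdist_clique_tensor[OF assms(2)] uv by metis
      moreover have "length w = length ms" using wG by (simp add: verts_clique_tensor)
      ultimately have "clique_tensor_dist u' (omit j w) \<noteq> clique_tensor_dist v' (omit j w)"
        using clique_tensor_dist_omit[of u w j] clique_tensor_dist_omit[of v w j] u v j assms(1)
        by (auto split: if_splits)
      moreover have "clique_tensor_dist u' (omit j w) = clique_tensor_dist v' (omit j w)"
        using same_dist w gdist_clique_tensor[OF factors_omit] u' v' wH by (metis image_eqI)
      ultimately show False by contradiction
    qed
  qed
qed

theorem proposition2p4:
  fixes ms :: "nat list"
  assumes "length ms \<ge> 2"
    and "\<forall>i<length ms. ms ! i \<ge> 3"
  shows "metric_dim (clique_tensor ms)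
           \<ge> Max ((\<lambda>j. metric_dim (clique_tensor (omit j ms))) ` {..<length ms})"
proof -
  obtain W where W: "finite W" "card W = metric_dim (clique_tensor ms)"
    "resolving (clique_tensor ms) W"
    using metric_dim_attained finite_verts_clique_tensor connected_clique_tensor[OF assms(2)] .
  have "metric_dim (clique_tensor (omit j ms)) \<le> metric_dim (clique_tensor ms)"
    if "j < length ms" for j
  proof -
    have "metric_dim (clique_tensor (omit j ms)) \<le> card (omit j ` W)"
      using W(1) resolving_clique_tensor_omit[OF assms that W(3)] by (simp add: metric_dim_le_card)
    also have "\<dots> \<le> card W" using W(1) by (rule card_image_le)
    finally show ?thesis using W(2) by simp
  qed
  then show ?thesis using assms(1) by (subst Max_le_iff) (auto simp: lessThan_empty_iff)
qed

end
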